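(* Let $X,Y,Z$ be random variables on finite alphabets $\mathcal{X},\mathcal{Y},\mathcal{Z}$, and let $\operatorname{Un}(X\to Z\mid Y)$ be the unique information defined below. Then $\operatorname{Un}(X\to Z\mid Y)\le H(Z\mid Y)$.
   Context: For each $y\in\mathcal{Y}$ with $\Pr(Y=y)>0$, let $(A_y,B_y,C_y)$ be the random triple on $\mathcal{X}\times\mathcal{Y}\times\mathcal{Z}$ with $\Pr(A_y=x,B_y=y',C_y=z)=0$ if $\Pr(Z=z)=0$ and $\Pr(A_y=x,B_y=y',C_y=z)=\Pr(X=x,Y=y',Z=z)\Pr(Z=z\mid Y=y)/\Pr(Z=z)$ otherwise. The unique information is $\operatorname{Un}(X\to Z\mid Y)=\sum_{y:\Pr(Y=y)>0}\Pr(Y=y)\,I(A_y;C_y)$, where $I$ is mutual information and $H$ Shannon entropy. *)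

theory Defs
  imports "HOL-Probability.Probability_Mass_Function"
begin

text \<open>Random variables X, Y, Z on finite alphabets are represented by their joint
  distribution, a pmf on the finite type 'x \<times> 'y \<times> 'z. Logarithms are to base 2
  (the inequality is independent of the base as long as it is used consistently).\<close>

definition pXYZ :: "('x \<times> 'y \<times> 'z) pmf \<Rightarrow> 'x \<Rightarrow> 'y \<Rightarrow> 'z \<Rightarrow> real" where
  "pXYZ p x y z = pmf p (x, y, z)"

definition pY :: "('x::finite \<times> 'y \<times> 'z::finite) pmf \<Rightarrow> 'y \<Rightarrow> real" where
  "pY p y = (\<Sum>x\<in>UNIV. \<Sum>z\<in>UNIV. pXYZ p x y z)"

definition pZ :: "('x::finite \<times> 'y::finite \<times> 'z) pmf \<Rightarrow> 'z \<Rightarrow> real" where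
  "pZ p z = (\<Sum>x\<in>UNIV. \<Sum>y\<in>UNIV. pXYZ p x y z)"

definition pYZ :: "('x::finite \<times> 'y \<times> 'z) pmf \<Rightarrow> 'y \<Rightarrow> 'z \<Rightarrow> real" where
  "pYZ p y z = (\<Sum>x\<in>UNIV. pXYZ p x y z)"

definition pZ_given_Y :: "('x::finite \<times> 'y::finite \<times> 'z::finite) pmf \<Rightarrow> 'z \<Rightarrow> 'y \<Rightarrow> real" where
  "pZ_given_Y p z y = pYZ p y z / pY p y"

definition triple_y :: "('x::finite \<times> 'y::finite \<times> 'z::finite) pmf \<Rightarrow> 'y \<Rightarrow> 'x \<Rightarrow> 'y \<Rightarrow> 'z \<Rightarrow> real" where
  "triple_y p y x y' z =
     (if pZ p z = 0 then 0 else pXYZ p x y' z * pZ_given_Y p z y / pZ p z)"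

definition mutual_info :: "('a::finite \<times> 'b::finite \<Rightarrow> real) \<Rightarrow> real" where
  "mutual_info q =
     (\<Sum>a\<in>UNIV. \<Sum>b\<in>UNIV.
        (let qab = q (a, b);
             qa = (\<Sum>b'\<in>UNIV. q (a, b'));
             qb = (\<Sum>a'\<in>UNIV. q (a', b))
         in if qab = 0 then 0 else qab * log 2 (qab / (qa * qb))))"

definition I_AC :: "('x::finite \<times> 'y::finite \<times> 'z::finite) pmf \<Rightarrow> 'y \<Rightarrow> real" where
  "I_AC p y = mutual_info (\<lambda>(x, z). \<Sum>y'\<in>UNIV. triple_y p y x y' z)"

definition unique_info :: "('x::finite \<times> 'y::finite \<times> 'z::finite) pmf \<Rightarrow> real" where
  "unique_info p = (\<Sum>y\<in>{y. pY p y > 0}. pY p y * I_AC p y)"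

definition cond_entropy_ZY :: "('x::finite \<times> 'y::finite \<times> 'z::finite) pmf \<Rightarrow> real" where
  "cond_entropy_ZY p =
     - (\<Sum>y\<in>UNIV. \<Sum>z\<in>UNIV.
          if pYZ p y z = 0 then 0 else pYZ p y z * log 2 (pYZ p y z / pY p y))"

end

theory Submission
  imports Defs
begin

text \<open>Mutual information never exceeds the entropy of either marginal, and the C-marginal
  of the triple (A_y, B_y, C_y) is the conditional law of Z given Y = y. Hence
  I(A_y; C_y) \<le> H(Z | Y = y), and averaging over y gives H(Z | Y).\<close>

definition shannon_entropy :: "('a::finite \<Rightarrow> real) \<Rightarrow> real" where
  "shannon_entropy f = - (\<Sum>a\<in>UNIV. f a * log 2 (f a))"

lemma mutual_info_summand_le:
  fixes qab qa qb :: real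
  assumes "0 \<le> qab" "qab \<le> qa" "qab \<le> qb"
  shows "(if qab = 0 then 0 else qab * log 2 (qab / (qa * qb))) \<le> - (qab * log 2 qb)"
proof (cases "qab = 0")
  case False
  then have pos: "qab > 0" "qa > 0" "qb > 0" using assms by auto
  have "qab / (qa * qb) \<le> 1 / qb"
    using pos assms by (simp add: field_simps)
  then have "log 2 (qab / (qa * qb)) \<le> log 2 (1 / qb)"
    using pos by (simp add: log_le_cancel_iff)
  also have "\<dots> = - log 2 qb"
    using pos by (simp add: log_divide)
  finally have "qab * log 2 (qab / (qa * qb)) \<le> qab * - log 2 qb"
    using pos by (intro mult_left_mono) auto
  then show ?thesis
    using False by simp
qed simp

lemma mutual_info_le_entropy_snd:
  fixes q :: "'a::finite \<times> 'b::finite \<Rightarrow> real"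
  assumes nonneg: "\<And>ab. 0 \<le> q ab"
  shows "mutual_info q \<le> shannon_entropy (\<lambda>b. \<Sum>a\<in>UNIV. q (a, b))"
proof -
  have "mutual_info q \<le> (\<Sum>a\<in>UNIV. \<Sum>b\<in>UNIV. - (q (a, b) * log 2 (\<Sum>a'\<in>UNIV. q (a', b))))"
    unfolding mutual_info_def Let_def
  proof (intro sum_mono mutual_info_summand_le)
    fix a b
    show "0 \<le> q (a, b)" by (rule nonneg)
    show "q (a, b) \<le> (\<Sum>b'\<in>UNIV. q (a, b'))"
      by (rule member_le_sum[where f = "\<lambda>b'. q (a, b')"]) (auto intro: nonneg)
    show "q (a, b) \<le> (\<Sum>a'\<in>UNIV. q (a', b))"
      by (rule member_le_sum[where f = "\<lambda>a'. q (a', b)"]) (auto intro: nonneg)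
  qed
  also have "\<dots> = shannon_entropy (\<lambda>b. \<Sum>a\<in>UNIV. q (a, b))"
    unfolding shannon_entropy_def
    by (subst sum.swap) (simp add: sum_negf sum_distrib_right)
  finally show ?thesis .
qed

lemma pYZ_nonneg: "0 \<le> pYZ p y z"
  unfolding pYZ_def pXYZ_def by (simp add: sum_nonneg)

lemma pY_nonneg: "0 \<le> pY p y"
  unfolding pY_def pXYZ_def by (simp add: sum_nonneg)

lemma pYZ_le_pY: "pYZ p y z \<le> pY p y"
  unfolding pYZ_def pY_def
  by (intro sum_mono member_le_sum) (auto simp: pXYZ_def)

lemma pYZ_le_pZ: "pYZ p y z \<le> pZ p z"
  unfolding pYZ_def pZ_def
  by (intro sum_mono member_le_sum[where f = "\<lambda>y'. pXYZ p _ y' z"]) (auto simp: pXYZ_def)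

lemma triple_y_nonneg: "0 \<le> triple_y p y x y' z"
  by (auto simp: triple_y_def pXYZ_def pZ_given_Y_def pZ_def pY_def pYZ_def
      intro!: sum_nonneg divide_nonneg_nonneg mult_nonneg_nonneg)

lemma triple_y_marginal_C:
  "(\<Sum>x\<in>UNIV. \<Sum>y'\<in>UNIV. triple_y p y x y' z) = pZ_given_Y p z y"
proof (cases "pZ p z = 0")
  case True
  then have "pYZ p y z = 0"
    using pYZ_le_pZ[of p y z] pYZ_nonneg[of p y z] by simp
  then show ?thesis
    using True by (simp add: triple_y_def pZ_given_Y_def)
next
  case False
  have "(\<Sum>x\<in>UNIV. \<Sum>y'\<in>UNIV. triple_y p y x y' z)
      = (\<Sum>x\<in>UNIV. \<Sum>y'\<in>UNIV. pXYZ p x y' z) * pZ_given_Y p z y / pZ p z"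
    using False by (simp add: triple_y_def sum_distrib_right sum_divide_distrib)
  then show ?thesis
    using False by (simp add: pZ_def)
qed

lemma I_AC_le_entropy_Z_given_Y: "I_AC p y \<le> shannon_entropy (\<lambda>z. pZ_given_Y p z y)"
proof -
  have "I_AC p y \<le> shannon_entropy (\<lambda>z. \<Sum>x\<in>UNIV. \<Sum>y'\<in>UNIV. triple_y p y x y' z)"
    unfolding I_AC_def
    by (rule order.trans[OF mutual_info_le_entropy_snd]) (auto simp: triple_y_nonneg sum_nonneg)
  then show ?thesis
    by (simp only: triple_y_marginal_C)
qed

lemma cond_entropy_ZY_eq_average:
  "cond_entropy_ZY p = (\<Sum>y\<in>UNIV. pY p y * shannon_entropy (\<lambda>z. pZ_given_Y p z y))"
proof -
  have "(if pYZ p y z = 0 then 0 else pYZ p y z * log 2 (pYZ p y z / pY p y))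
      = pY p y * (pZ_given_Y p z y * log 2 (pZ_given_Y p z y))" for y z
  proof (cases "pY p y = 0")
    case True
    then have "pYZ p y z = 0"
      using pYZ_le_pY[of p y z] pYZ_nonneg[of p y z] by simp
    then show ?thesis
      using True by simp
  next
    case False
    then show ?thesis by (simp add: pZ_given_Y_def)
  qed
  then show ?thesis
    unfolding cond_entropy_ZY_def shannon_entropy_def
    by (simp add: sum_distrib_left sum_negf)
qed

theorem lemma5:
  fixes p :: "('x::finite \<times> 'y::finite \<times> 'z::finite) pmf"
  shows "unique_info p \<le> cond_entropy_ZY p"
proof -
  let ?H = "\<lambda>y. shannon_entropy (\<lambda>z. pZ_given_Y p z y)"
  have "unique_info p \<le> (\<Sum>y\<in>{y. pY p y > 0}. pY p y * ?H y)"
    unfolding unique_info_def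
    by (intro sum_mono mult_left_mono I_AC_le_entropy_Z_given_Y) simp
  also have "\<dots> = (\<Sum>y\<in>UNIV. pY p y * ?H y)"
    using pY_nonneg[of p] by (intro sum.mono_neutral_left) (auto simp: not_less intro: order.antisym)
  also have "\<dots> = cond_entropy_ZY p"
    by (rule cond_entropy_ZY_eq_average[symmetric])
  finally show ?thesis .
qed

end
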